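(* For every $n\ge0$, $$B_{n,q}(x)=\sum_{k=0}^{n}\binom{n}{k}_qB_{n-k,q}(1)\,(x-1)_q^{k}.$$
   Context: Fix $q$ with $0<q<1$. For an integer $n\geq 0$ let $[n]_q=\frac{1-q^n}{1-q}$, $[n]_q!=[n]_q[n-1]_q\cdots[1]_q$ (with $[0]_q!=1$), and for $0\le l\le n$ let $\binom{n}{l}_q=\frac{[n]_q!}{[l]_q!\,[n-l]_q!}$. Let $e_q(t)=\sum_{n\ge0}\frac{t^n}{[n]_q!}$ (a formal power series). The $q$-Bernoulli polynomials $B_{n,q}(x)$ are defined by $\frac{t}{e_q(t)-1}e_q(xt)=\sum_{n\ge0}B_{n,q}(x)\frac{t^n}{[n]_q!}$. For $k\ge0$, $(x-1)_q^{k}=(x-1)(x-q)\cdots(x-q^{k-1})$, with $(x-1)_q^0=1$. *)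

theory Defs
  imports Complex_Main "HOL-Computational_Algebra.Formal_Power_Series"
begin

definition qint :: "real \<Rightarrow> nat \<Rightarrow> real" where
  "qint q n = (1 - q ^ n) / (1 - q)"

definition qfact :: "real \<Rightarrow> nat \<Rightarrow> real" where
  "qfact q n = (\<Prod>i\<in>{1..n}. qint q i)"

definition qbinom :: "real \<Rightarrow> nat \<Rightarrow> nat \<Rightarrow> real" where
  "qbinom q n l = qfact q n / (qfact q l * qfact q (n - l))"

definition eq_fps :: "real \<Rightarrow> real \<Rightarrow> real fps" where
  "eq_fps q x = Abs_fps (\<lambda>n. x ^ n / qfact q n)"

definition qbernoulli :: "real \<Rightarrow> nat \<Rightarrow> real \<Rightarrow> real" where
  "qbernoulli q n x =
     qfact q n * fps_nth ((fps_X / (eq_fps q 1 - 1)) * eq_fps q x) n"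

definition qpow_shift :: "real \<Rightarrow> real \<Rightarrow> nat \<Rightarrow> real" where
  "qpow_shift q x k = (\<Prod>i<k. (x - q ^ i))"

end

theory Submission
  imports Defs
begin

text \<open>The q-binomial theorem in Newton form, x^n = sum_k [n choose k]_q (x-1)_q^k, follows by
  induction from the q-Pascal rule. Dividing by [n]_q! it says that the series e_q(xt) is the
  product of e_q(t) with P(t) = sum_k (x-1)_q^k t^k/[k]_q!. Multiplying by t/(e_q(t)-1) and comparing
  coefficients of t^n gives the expansion of B_{n,q}(x) around 1.\<close>

lemma qint_eq_sum: "q \<noteq> 1 \<Longrightarrow> qint q n = (\<Sum>i<n. q ^ i)"
  by (simp add: qint_def sum_gp_strict)

lemma qint_pos: "0 < q \<Longrightarrow> q \<noteq> 1 \<Longrightarrow> 1 \<le> n \<Longrightarrow> 0 < qint q n"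
  unfolding qint_eq_sum by (intro sum_pos) (auto simp: lessThan_empty_iff)

lemma qfact_0 [simp]: "qfact q 0 = 1"
  by (simp add: qfact_def)

lemma qfact_Suc: "qfact q (Suc n) = qfact q n * qint q (Suc n)"
  by (simp add: qfact_def prod.nat_ivl_Suc' mult.commute)

lemma qfact_pos: "0 < q \<Longrightarrow> q \<noteq> 1 \<Longrightarrow> 0 < qfact q n"
  unfolding qfact_def by (intro prod_pos) (auto intro: qint_pos)

lemma qfact_nonzero: "0 < q \<Longrightarrow> q \<noteq> 1 \<Longrightarrow> qfact q n \<noteq> 0"
  using qfact_pos[of q n] by simp

lemma qbinom_0 [simp]: "0 < q \<Longrightarrow> q \<noteq> 1 \<Longrightarrow> qbinom q n 0 = 1"
  using qfact_nonzero[of q n] by (simp add: qbinom_def)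

lemma qbinom_self [simp]: "0 < q \<Longrightarrow> q \<noteq> 1 \<Longrightarrow> qbinom q n n = 1"
  using qfact_nonzero[of q n] by (simp add: qbinom_def)

lemma qint_add: "q \<noteq> 1 \<Longrightarrow> qint q (i + m) = qint q i + q ^ i * qint q m"
  by (simp add: qint_def power_add field_simps)

lemma qbinom_Suc:
  assumes "0 < q" "q \<noteq> 1" "1 \<le> j" "j \<le> n"
  shows "qbinom q (Suc n) j = qbinom q n (j - 1) + q ^ j * qbinom q n j"
proof -
  obtain i where j: "j = Suc i"
    using assms(3) by (cases j) auto
  define m where "m = n - j"
  have n: "n = Suc i + m"
    using assms(4) j m_def by simp
  have nz: "qfact q i \<noteq> 0" "qfact q m \<noteq> 0" "qint q (Suc i) \<noteq> 0" "qint q (Suc m) \<noteq> 0"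
    using qfact_nonzero[OF assms(1,2)] qint_pos[OF assms(1,2)]
    by (auto simp: less_imp_neq[symmetric])
  define c where "c = qfact q n / (qfact q i * qint q (Suc i) * qfact q m * qint q (Suc m))"
  have "qbinom q (Suc n) j = c * qint q (Suc n)"
    using n by (simp add: qbinom_def j c_def qfact_Suc)
  also have "\<dots> = c * qint q (Suc i) + q ^ j * (c * qint q (Suc m))"
    using qint_add[OF assms(2), of "Suc i" "Suc m"] n j by (simp add: algebra_simps)
  also have "c * qint q (Suc i) = qbinom q n (j - 1)"
    using n nz by (simp add: qbinom_def j c_def qfact_Suc)
  also have "c * qint q (Suc m) = qbinom q n j"
    using n nz by (simp add: qbinom_def j c_def qfact_Suc)
  finally show ?thesis .
qed

lemma qpow_shift_Suc: "qpow_shift q x (Suc k) = qpow_shift q x k * (x - q ^ k)"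
  by (simp add: qpow_shift_def)

lemma power_eq_sum_qbinom_qpow_shift:
  assumes "0 < q" "q \<noteq> 1"
  shows "x ^ n = (\<Sum>k=0..n. qbinom q n k * qpow_shift q x k)"
proof (induction n)
  case 0
  then show ?case using assms by (simp add: qpow_shift_def)
next
  case (Suc n)
  define b where "b = qbinom q n"
  define s where "s = qpow_shift q x"
  have x_mult_s: "x * s k = s (Suc k) + q ^ k * s k" for k
    by (simp add: s_def qpow_shift_Suc algebra_simps)
  have "x ^ Suc n = (\<Sum>k=0..n. b k * (x * s k))"
    using Suc by (simp add: b_def s_def sum_distrib_left algebra_simps)
  also have "\<dots> = (\<Sum>k=0..n. b k * s (Suc k)) + (\<Sum>k=0..n. q ^ k * b k * s k)"
    by (simp add: x_mult_s sum.distrib algebra_simps)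
  also have "(\<Sum>k=0..n. b k * s (Suc k)) = (\<Sum>k=1..n. b (k - 1) * s k) + s (Suc n)"
  proof -
    have "(\<Sum>k=0..n. b k * s (Suc k)) = (\<Sum>k=Suc 0..Suc n. b (k - 1) * s k)"
      by (subst sum.shift_bounds_cl_Suc_ivl) simp
    then show ?thesis
      using assms by (simp add: sum.nat_ivl_Suc' b_def)
  qed
  also have "(\<Sum>k=0..n. q ^ k * b k * s k) = s 0 + (\<Sum>k=1..n. q ^ k * b k * s k)"
    using assms by (simp add: sum.atLeast_Suc_atMost b_def)
  finally have "x ^ Suc n = s 0 + (\<Sum>k=1..n. (b (k - 1) + q ^ k * b k) * s k) + s (Suc n)"
    by (simp add: sum.distrib algebra_simps)
  also have "(\<Sum>k=1..n. (b (k - 1) + q ^ k * b k) * s k) = (\<Sum>k=1..n. qbinom q (Suc n) k * s k)"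
    using qbinom_Suc[OF assms] by (intro sum.cong) (auto simp: b_def)
  finally show ?case
    using assms by (simp add: s_def sum.atLeast_Suc_atMost sum.nat_ivl_Suc')
qed

definition qpow_shift_fps :: "real \<Rightarrow> real \<Rightarrow> real fps" where
  "qpow_shift_fps q x = Abs_fps (\<lambda>k. qpow_shift q x k / qfact q k)"

lemma eq_fps_eq_qpow_shift_fps_mult:
  assumes "0 < q" "q \<noteq> 1"
  shows "eq_fps q x = qpow_shift_fps q x * eq_fps q 1"
proof (rule fps_ext)
  fix n
  have "x ^ n / qfact q n = (\<Sum>k=0..n. qbinom q n k * qpow_shift q x k) / qfact q n"
    using power_eq_sum_qbinom_qpow_shift[OF assms] by simp
  also have "\<dots> = (\<Sum>k=0..n. qpow_shift q x k / qfact q k * (1 / qfact q (n - k)))"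
    unfolding sum_divide_distrib qbinom_def
    by (intro sum.cong) (auto simp: field_simps qfact_nonzero[OF assms])
  finally show "fps_nth (eq_fps q x) n = fps_nth (qpow_shift_fps q x * eq_fps q 1) n"
    by (simp add: eq_fps_def qpow_shift_fps_def fps_mult_nth)
qed

theorem mainTheorem7:
  fixes q x :: real and n :: nat
  assumes "0 < q" and "q < 1"
  shows "qbernoulli q n x =
    (\<Sum>k=0..n. qbinom q n k * qbernoulli q (n - k) 1 * qpow_shift q x k)"
proof -
  have q: "0 < q" "q \<noteq> 1" using assms by simp_all
  define B1 where "B1 = fps_X / (eq_fps q 1 - 1) * eq_fps q 1"
  note nz = qfact_nonzero[OF q]
  have B1_nth: "fps_nth B1 m = qbernoulli q m 1 / qfact q m" for m
    by (simp add: qbernoulli_def B1_def nz)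
  have "qbernoulli q n x = qfact q n * fps_nth (qpow_shift_fps q x * B1) n"
    \<comment> \<open>instantiated at x: with x schematic, unfolding would also rewrite e_q(t) forever\<close>
    unfolding qbernoulli_def eq_fps_eq_qpow_shift_fps_mult[OF q, of x] B1_def
    by (simp add: algebra_simps)
  also have "\<dots> = (\<Sum>k=0..n. qfact q n *
      (qpow_shift q x k / qfact q k * (qbernoulli q (n - k) 1 / qfact q (n - k))))"
    by (simp add: fps_mult_nth B1_nth qpow_shift_fps_def sum_distrib_left)
  also have "\<dots> = (\<Sum>k=0..n. qbinom q n k * qbernoulli q (n - k) 1 * qpow_shift q x k)"
    unfolding qbinom_def by (intro sum.cong) (auto simp: field_simps nz)
  finally show ?thesis .
qed

end
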